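(* Let $f$ be a uniform continuation of $F$, and let $K$ be a sequence of positive real numbers approaching $\infty$. Then $\{f^{-1}(\lfloor K_n\rfloor)\}=\{f^{-1}(K_n)\}+o(1)$ as $n\to\infty$.
   Context: $F$: $F_1=1,F_2=2,F_{n+2}=F_{n+1}+F_n$. A uniform continuation of $F$ is an increasing continuous function $f:[1,\infty)\to\mathbb{R}$ with $f(n)=F_n$ for all $n\in\mathbb{N}$ such that $f_n(p)=\frac{f(n+p)-f(n)}{f(n+1)-f(n)}$ ($p\in[0,1]$) converges uniformly on $[0,1]$ to an increasing continuous function $f_\infty$; $f^{-1}$ denotes the inverse of $f$, and $\{y\}$ denotes the fractional part. *)

theory Defs
  imports "HOL-Analysis.Analysis"
begin

text \<open>The sequence F with F 1 = 1, F 2 = 2, F (n+2) = F (n+1) + F n (index 0 unused).\<close>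
fun FF :: "nat \<Rightarrow> real" where
  "FF 0 = 0"
| "FF (Suc 0) = 1"
| "FF (Suc (Suc 0)) = 2"
| "FF (Suc (Suc (Suc n))) = FF (Suc (Suc n)) + FF (Suc n)"

definition incr_fn :: "(real \<Rightarrow> real) \<Rightarrow> nat \<Rightarrow> real \<Rightarrow> real" where
  "incr_fn f n p = (f (real n + p) - f (real n)) / (f (real n + 1) - f (real n))"

definition uniform_continuation :: "(real \<Rightarrow> real) \<Rightarrow> bool" where
  "uniform_continuation f \<longleftrightarrow>
     strict_mono_on {1..} f \<and> continuous_on {1..} f \<and>
     (\<forall>n::nat. n \<ge> 1 \<longrightarrow> f (real n) = FF n) \<and>
     (\<exists>finf. strict_mono_on {0..1} finf \<and> continuous_on {0..1} finf \<and>
        uniform_limit {0..1} (incr_fn f) finf sequentially)"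

definition finv :: "(real \<Rightarrow> real) \<Rightarrow> real \<Rightarrow> real" where
  "finv f y = the_inv_into {1..} f y"

end

theory Submission
  imports Defs
begin

text \<open>Let x be the preimage of K under f and m = \<lfloor>x\<rfloor>. Since F m \<le> K < F (m + 1) and
  F m is an integer, the preimage of \<lfloor>K\<rfloor> lies in the same interval [m, m + 1), and the
  normalized increments f_m at the two fractional parts differ by at most
  1 / (F (m + 1) - F m) = 1 / F (m - 1), which tends to 0. By uniform convergence the values
  of f_\<infinity> at the two fractional parts become close, and since f_\<infinity> is a continuous
  injection on the compact interval [0,1], its inverse is uniformly continuous, so the
  fractional parts themselves become close.\<close>

lemma tendsto_dist_0_inj_compact:
  fixes g :: "'a::metric_space \<Rightarrow> 'b::metric_space"
  assumes "compact S" "continuous_on S g" "inj_on g S"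
    and "\<forall>\<^sub>F n in F. p n \<in> S \<and> q n \<in> S"
    and "((\<lambda>n. dist (g (p n)) (g (q n))) \<longlongrightarrow> 0) F"
  shows "((\<lambda>n. dist (p n) (q n)) \<longlongrightarrow> 0) F"
proof -
  let ?g' = "the_inv_into S g"
  have "continuous_on (g ` S) ?g'"
    using continuous_on_inv[OF assms(2,1)] assms(3) by (simp add: the_inv_into_f_f)
  then have uc: "uniformly_continuous_on (g ` S) ?g'"
    using assms(1,2) by (simp add: compact_continuous_image compact_uniformly_continuous)
  show ?thesis
    unfolding tendsto_iff
  proof (intro allI impI)
    fix e :: real assume "e > 0"
    then obtain d where "d > 0"
      and d: "\<And>u v. u \<in> g ` S \<Longrightarrow> v \<in> g ` S \<Longrightarrow> dist v u < d \<Longrightarrow> dist (?g' v) (?g' u) < e"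
      using uc unfolding uniformly_continuous_on_def by metis
    have "\<forall>\<^sub>F n in F. dist (g (p n)) (g (q n)) < d"
      using assms(5) \<open>d > 0\<close> by (auto simp: tendsto_iff)
    with assms(4) show "\<forall>\<^sub>F n in F. dist (dist (p n) (q n)) 0 < e"
    proof eventually_elim
      case (elim n)
      then have "dist (?g' (g (p n))) (?g' (g (q n))) < e"
        using d[of "g (q n)" "g (p n)"] by auto
      then show ?case
        using elim assms(3) by (simp add: the_inv_into_f_f)
    qed
  qed
qed

lemma uniform_limit_tendsto_dist_0:
  assumes "uniform_limit S h g sequentially" "filterlim m sequentially F"
    and "\<forall>\<^sub>F n in F. p n \<in> S"
  shows "((\<lambda>n. dist (h (m n) (p n)) (g (p n))) \<longlongrightarrow> 0) F"
  unfolding tendsto_iff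
proof (intro allI impI)
  fix e :: real assume "e > 0"
  with assms(1) have "\<forall>\<^sub>F k in sequentially. \<forall>x\<in>S. dist (h k x) (g x) < e"
    by (rule uniform_limitD)
  then have "\<forall>\<^sub>F n in F. \<forall>x\<in>S. dist (h (m n) x) (g x) < e"
    using assms(2) by (rule eventually_compose_filterlim)
  with assms(3) show "\<forall>\<^sub>F n in F. dist (dist (h (m n) (p n)) (g (p n))) 0 < e"
    by eventually_elim simp
qed

lemma uniform_limit_inj_tendsto_dist_0:
  fixes g :: "'a::metric_space \<Rightarrow> 'b::metric_space"
  assumes "uniform_limit S h g sequentially" "compact S" "continuous_on S g" "inj_on g S"
    and "filterlim m sequentially F" "\<forall>\<^sub>F n in F. p n \<in> S \<and> q n \<in> S"
    and "((\<lambda>n. dist (h (m n) (p n)) (h (m n) (q n))) \<longlongrightarrow> 0) F"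
  shows "((\<lambda>n. dist (p n) (q n)) \<longlongrightarrow> 0) F"
proof (rule tendsto_dist_0_inj_compact[OF assms(2-4,6)])
  let ?bound = "\<lambda>n. dist (h (m n) (p n)) (g (p n)) + dist (h (m n) (p n)) (h (m n) (q n))
    + dist (h (m n) (q n)) (g (q n))"
  have "\<forall>\<^sub>F n in F. p n \<in> S" "\<forall>\<^sub>F n in F. q n \<in> S"
    using assms(6) unfolding eventually_conj_iff by blast+
  then have "(?bound \<longlongrightarrow> 0) F"
    by (intro tendsto_add_zero assms(7) uniform_limit_tendsto_dist_0[OF assms(1,5)])
  moreover have "\<forall>\<^sub>F n in F. norm (dist (g (p n)) (g (q n))) \<le> ?bound n"
  proof (rule always_eventually, rule allI)
    fix n
    show "norm (dist (g (p n)) (g (q n))) \<le> ?bound n"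
      using dist_triangle[of "g (p n)" "g (q n)" "h (m n) (p n)"]
        dist_triangle[of "h (m n) (p n)" "g (q n)" "h (m n) (q n)"]
        dist_commute[of "g (p n)" "h (m n) (p n)"] by simp
  qed
  ultimately show "((\<lambda>n. dist (g (p n)) (g (q n))) \<longlongrightarrow> 0) F"
    by (rule Lim_null_comparison[rotated])
qed

lemma FF_Ints: "FF n \<in> \<int>"
  by (induction n rule: FF.induct) auto

lemma FF_ge: "real n \<le> FF n"
  by (induction n rule: FF.induct) auto

lemma FF_Suc_minus_ge: "real n - 1 \<le> FF (Suc n) - FF n"
proof (cases n rule: FF.cases)
  case (4 k)
  then show ?thesis using FF_ge[of "Suc (Suc k)"] by simp
qed auto

lemma filterlim_FF_Suc_minus: "filterlim (\<lambda>n. FF (Suc n) - FF n) at_top sequentially"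
proof (rule filterlim_at_top_mono[OF _ always_eventually[OF allI[OF FF_Suc_minus_ge]]])
  show "filterlim (\<lambda>n. real n - 1) at_top sequentially"
    unfolding diff_conv_add_uminus
    by (subst add.commute) (intro filterlim_tendsto_add_at_top[OF tendsto_const filterlim_real_sequentially])
qed

lemma uniform_continuation_FF:
  "uniform_continuation f \<Longrightarrow> 1 \<le> n \<Longrightarrow> f (real n) = FF n"
  unfolding uniform_continuation_def by blast

lemma uniform_continuation_less_iff:
  "uniform_continuation f \<Longrightarrow> 1 \<le> x \<Longrightarrow> 1 \<le> x' \<Longrightarrow> f x < f x' \<longleftrightarrow> x < x'"
  unfolding uniform_continuation_def by (auto simp: strict_mono_on_less)

lemma finv_eqI:
  assumes "uniform_continuation f" "1 \<le> x" "f x = y"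
  shows "finv f y = x"
  using assms unfolding finv_def uniform_continuation_def
  by (auto intro: the_inv_into_f_eq strict_mono_on_imp_inj_on)

lemma uniform_continuation_finv:
  assumes uc: "uniform_continuation f" and "1 \<le> y"
  shows "1 \<le> finv f y" "f (finv f y) = y"
proof -
  obtain N :: nat where N: "y < real N"
    using reals_Archimedean2 by blast
  with \<open>1 \<le> y\<close> have "f 1 \<le> y" "y \<le> f (real N)" "1 \<le> real N"
    using uniform_continuation_FF[OF uc, of 1] uniform_continuation_FF[OF uc, of N] FF_ge[of N]
    by auto
  moreover have "continuous_on {1..real N} f"
    using uc unfolding uniform_continuation_def by (auto elim: continuous_on_subset)
  ultimately obtain x where "1 \<le> x" "f x = y"
    using IVT'[of f 1 y "real N"] by auto
  then show "1 \<le> finv f y" "f (finv f y) = y"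
    using finv_eqI[OF uc] by auto
qed

lemma filterlim_finv_at_top:
  assumes uc: "uniform_continuation f" and K: "filterlim K at_top F"
  shows "filterlim (\<lambda>n. finv f (K n)) at_top F"
  unfolding filterlim_at_top
proof
  fix Z :: real
  obtain N :: nat where N: "max Z 1 \<le> real N"
    using real_arch_simple by blast
  from K have "\<forall>\<^sub>F n in F. FF N \<le> K n"
    by (simp add: filterlim_at_top)
  then show "\<forall>\<^sub>F n in F. Z \<le> finv f (K n)"
  proof eventually_elim
    case (elim n)
    with N have "1 \<le> K n" "f (real N) \<le> K n"
      using FF_ge[of N] uniform_continuation_FF[OF uc, of N] by auto
    with N show ?case
      using uniform_continuation_finv[OF uc] uniform_continuation_less_iff[OF uc, of "finv f (K n)" N]
      by fastforce
  qed
qed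

text \<open>Each F m is an integer, so rounding y down cannot cross one of them.\<close>

lemma floor_finv_floor:
  assumes uc: "uniform_continuation f" and "1 \<le> y"
  shows "\<lfloor>finv f (of_int \<lfloor>y\<rfloor>)\<rfloor> = \<lfloor>finv f y\<rfloor>"
proof -
  define x where "x = finv f y"
  define m where "m = nat \<lfloor>x\<rfloor>"
  define x' where "x' = finv f (of_int \<lfloor>y\<rfloor>)"
  have x: "1 \<le> x" "f x = y"
    using uniform_continuation_finv[OF uc \<open>1 \<le> y\<close>] by (auto simp: x_def)
  then have m: "1 \<le> m" "real m \<le> x" "x < real m + 1" "\<lfloor>x\<rfloor> = int m"
    unfolding m_def by linarith+
  have fm: "f (real m) = FF m"
    using uniform_continuation_FF[OF uc, of m] m by simp
  have "FF m \<le> y"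
    using uniform_continuation_less_iff[OF uc, of x m] m x fm by fastforce
  moreover obtain k where "FF m = of_int k"
    using FF_Ints by (auto elim: Ints_cases)
  ultimately have lower: "f (real m) \<le> of_int \<lfloor>y\<rfloor>"
    using fm by (simp add: le_floor_iff)
  have "f x < f (real m + 1)"
    using uniform_continuation_less_iff[OF uc, of x "real m + 1"] m x by simp
  then have upper: "of_int \<lfloor>y\<rfloor> < f (real m + 1)"
    using x by linarith
  have "1 \<le> real_of_int \<lfloor>y\<rfloor>"
    using \<open>1 \<le> y\<close> by (simp add: le_floor_iff)
  then have x': "1 \<le> x'" "f x' = of_int \<lfloor>y\<rfloor>"
    using uniform_continuation_finv[OF uc] by (auto simp: x'_def)
  have "real m \<le> x'"
    using uniform_continuation_less_iff[OF uc, of x' m] lower x' m by fastforce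
  moreover have "x' < real m + 1"
    using uniform_continuation_less_iff[OF uc, of x' "real m + 1"] upper x' m by simp
  ultimately show ?thesis
    using m unfolding x_def x'_def by linarith
qed

lemma incr_fn_frac:
  "\<lfloor>x\<rfloor> = int m \<Longrightarrow> incr_fn f m (frac x) = (f x - f (real m)) / (f (real m + 1) - f (real m))"
  by (simp add: incr_fn_def frac_def)

lemma incr_fn_finv_floor_diff_le:
  assumes uc: "uniform_continuation f" and "1 \<le> y" and m: "m = nat \<lfloor>finv f y\<rfloor>"
  shows "\<bar>incr_fn f m (frac (finv f (of_int \<lfloor>y\<rfloor>))) - incr_fn f m (frac (finv f y))\<bar>
    \<le> 1 / (FF (Suc m) - FF m)"
proof -
  have "1 \<le> finv f y"
    using uniform_continuation_finv[OF uc \<open>1 \<le> y\<close>] by simp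
  then have fl: "\<lfloor>finv f y\<rfloor> = int m" "\<lfloor>finv f (of_int \<lfloor>y\<rfloor>)\<rfloor> = int m" "1 \<le> m"
    using floor_finv_floor[OF uc \<open>1 \<le> y\<close>] m by linarith+
  have "1 \<le> real_of_int \<lfloor>y\<rfloor>"
    using \<open>1 \<le> y\<close> by (simp add: le_floor_iff)
  then have "f (finv f (of_int \<lfloor>y\<rfloor>)) = of_int \<lfloor>y\<rfloor>" "f (finv f y) = y"
    using uniform_continuation_finv[OF uc] \<open>1 \<le> y\<close> by auto
  moreover have fm: "f (real m) = FF m" "f (real m + 1) = FF (Suc m)"
    using uniform_continuation_FF[OF uc, of m] uniform_continuation_FF[OF uc, of "Suc m"] fl(3)
    by (auto simp: add.commute)
  moreover have "FF m < FF (Suc m)"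
    using uniform_continuation_less_iff[OF uc, of m "real m + 1"] fm fl(3) by simp
  ultimately have "incr_fn f m (frac (finv f (of_int \<lfloor>y\<rfloor>))) - incr_fn f m (frac (finv f y))
      = (of_int \<lfloor>y\<rfloor> - y) / (FF (Suc m) - FF m)"
    using fl(1,2) by (simp add: incr_fn_frac diff_divide_distrib)
  moreover have "\<bar>of_int \<lfloor>y\<rfloor> - y\<bar> \<le> 1"
    by linarith
  ultimately show ?thesis
    using \<open>FF m < FF (Suc m)\<close> by (simp add: abs_divide divide_right_mono)
qed

theorem lemma5p5:
  fixes f :: "real \<Rightarrow> real" and K :: "nat \<Rightarrow> real"
  assumes "uniform_continuation f"
    and "\<And>n. K n > 0"
    and "filterlim K at_top sequentially"
  shows "(\<lambda>n. frac (finv f (of_int \<lfloor>K n\<rfloor>)) - frac (finv f (K n))) \<longlonglongrightarrow> 0"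
proof -
  obtain finf where finf: "strict_mono_on {0..1} finf" "continuous_on {0..1} finf"
    and lim: "uniform_limit {0..1} (incr_fn f) finf sequentially"
    using assms(1) unfolding uniform_continuation_def by blast
  define m where "m n = nat \<lfloor>finv f (K n)\<rfloor>" for n
  have m_lim: "filterlim m sequentially sequentially"
    unfolding m_def using filterlim_finv_at_top[OF assms(1,3)]
    by (intro filterlim_compose[OF filterlim_nat_sequentially]
        filterlim_compose[OF filterlim_floor_sequentially])
  have "\<forall>\<^sub>F n in sequentially. 1 \<le> K n"
    using assms(3) by (simp add: filterlim_at_top)
  then have "\<forall>\<^sub>F n in sequentially. norm (dist (incr_fn f (m n) (frac (finv f (of_int \<lfloor>K n\<rfloor>))))
      (incr_fn f (m n) (frac (finv f (K n))))) \<le> 1 / (FF (Suc (m n)) - FF (m n))"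
    by eventually_elim (simp add: dist_real_def incr_fn_finv_floor_diff_le[OF assms(1) _ m_def])
  moreover have "((\<lambda>n. 1 / (FF (Suc (m n)) - FF (m n))) \<longlongrightarrow> 0) sequentially"
    by (intro tendsto_divide_0[OF tendsto_const] filterlim_at_top_imp_at_infinity
        filterlim_compose[OF filterlim_FF_Suc_minus m_lim])
  ultimately have "((\<lambda>n. dist (incr_fn f (m n) (frac (finv f (of_int \<lfloor>K n\<rfloor>))))
      (incr_fn f (m n) (frac (finv f (K n))))) \<longlongrightarrow> 0) sequentially"
    by (rule Lim_null_comparison)
  moreover have "frac x \<in> {0..1}" for x :: real
    using frac_lt_1[of x] by simp
  ultimately have "((\<lambda>n. dist (frac (finv f (of_int \<lfloor>K n\<rfloor>))) (frac (finv f (K n)))) \<longlongrightarrow> 0) sequentially"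
    using uniform_limit_inj_tendsto_dist_0[OF lim compact_Icc finf(2)
        strict_mono_on_imp_inj_on[OF finf(1)] m_lim] by simp
  then show ?thesis
    by (simp add: dist_real_def tendsto_rabs_zero_iff)
qed

end
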